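(* Assume $W$ satisfies conditions (i) and (ii) below on $[0,T]$. Then for every integer $r\ge1$ there is a constant $C$ such that for all $n\ge1$ and $0\le t\le T$, $$\sum_{j,k=1}^{\lfloor nt/2\rfloor}\Big(|\beta_n(2j-1,2k-1)|^r+|\beta_n(2j-1,2k-2)|^r+|\beta_n(2j-2,2k-1)|^r+|\beta_n(2j-2,2k-2)|^r\Big)\le C\Big\lfloor\frac{nt}{2}\Big\rfloor n^{-r/2}.$$
   Context: $W=\{W_t,t\ge0\}$ is a centered Gaussian process with continuous covariance. For integers $j,k\ge0$, $n\ge1$: $\beta_n(j,k)=\mathbb E[(W_{(j+1)/n}-W_{j/n})(W_{(k+1)/n}-W_{k/n})]$. Fix $T>0$. Condition (i): there is $C_1$ such that $\mathbb E[(W_t-W_{t-s})^2]\le C_1 s^{1/2}$ for all $0<s\le t\le T$. Condition (ii): there are constants $C_1$ and $1<\alpha\le 3/2$, $\beta=\tfrac32-\alpha$, such that for all $s>0$ and $2s\le r,t\le T$ with $|t-r|\ge2s$: $|\mathbb E[(W_t-W_{t-s})(W_r-W_{r-s})]|\le C_1s^2|t-r|^{-\alpha}(t\wedge r-s)^{-\beta}+C_1s^2|t-r|^{-3/2}$. *)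

theory Defs
  imports "HOL-Probability.Probability"
begin

definition centered_gaussian_process :: "'a measure \<Rightarrow> (real \<Rightarrow> 'a \<Rightarrow> real) \<Rightarrow> bool" where
  "centered_gaussian_process M W \<longleftrightarrow>
     prob_space M \<and> (\<forall>t\<ge>0. W t \<in> borel_measurable M) \<and>
     (\<forall>(ts :: real list) (cs :: real list). length ts = length cs \<longrightarrow> (\<forall>t\<in>set ts. t \<ge> 0) \<longrightarrow>
        (let X = (\<lambda>\<omega>. \<Sum>i<length ts. cs ! i * W (ts ! i) \<omega>) in
          (AE \<omega> in M. X \<omega> = 0) \<or>
          (\<exists>\<sigma>>0. distributed M lborel X (normal_density 0 \<sigma>))))"

definition cov_fun :: "'a measure \<Rightarrow> (real \<Rightarrow> 'a \<Rightarrow> real) \<Rightarrow> real \<Rightarrow> real \<Rightarrow> real" where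
  "cov_fun M W s t = (\<integral>\<omega>. W s \<omega> * W t \<omega> \<partial>M)"

definition beta :: "'a measure \<Rightarrow> (real \<Rightarrow> 'a \<Rightarrow> real) \<Rightarrow> nat \<Rightarrow> nat \<Rightarrow> nat \<Rightarrow> real" where
  "beta M W n j k = (\<integral>\<omega>. (W (real (j+1) / real n) \<omega> - W (real j / real n) \<omega>) *
                          (W (real (k+1) / real n) \<omega> - W (real k / real n) \<omega>) \<partial>M)"

definition cond_i :: "'a measure \<Rightarrow> (real \<Rightarrow> 'a \<Rightarrow> real) \<Rightarrow> real \<Rightarrow> bool" where
  "cond_i M W T \<longleftrightarrow> (\<exists>C1::real. \<forall>s t. 0 < s \<and> s \<le> t \<and> t \<le> T \<longrightarrow>
      (\<integral>\<omega>. (W t \<omega> - W (t - s) \<omega>)\<^sup>2 \<partial>M) \<le> C1 * s powr (1/2))"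

text \<open>Condition (ii) on [0,T], with beta = 3/2 - alpha.\<close>
definition cond_ii :: "'a measure \<Rightarrow> (real \<Rightarrow> 'a \<Rightarrow> real) \<Rightarrow> real \<Rightarrow> bool" where
  "cond_ii M W T \<longleftrightarrow> (\<exists>C1::real. \<exists>\<alpha>::real. 1 < \<alpha> \<and> \<alpha> \<le> 3/2 \<and>
     (\<forall>s r t. 0 < s \<and> 2 * s \<le> r \<and> r \<le> T \<and> 2 * s \<le> t \<and> t \<le> T \<and> \<bar>t - r\<bar> \<ge> 2 * s \<longrightarrow>
        \<bar>(\<integral>\<omega>. (W t \<omega> - W (t - s) \<omega>) * (W r \<omega> - W (r - s) \<omega>) \<partial>M)\<bar>
          \<le> C1 * s\<^sup>2 * \<bar>t - r\<bar> powr (-\<alpha>) * (min t r - s) powr (-(3/2 - \<alpha>))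
             + C1 * s\<^sup>2 * \<bar>t - r\<bar> powr (-3/2)))"

end

theory Submission
  imports Defs
begin

(* Write a = 2j-1 or 2j-2 and b = 2k-1 or 2k-2 for the indices in the
   sum.  The increment covariance beta_n(a,b) has the decay estimate
     |beta_n(a,b)| <= K n^(-1/2) w(a,b),
   where w(a,b) = 1 near the diagonal or the boundary (a = 0, b = 0, |a-b| <= 1)
   and w(a,b) = |a-b|^(-alpha) otherwise: the first case follows from condition (i)
   by bounding |E[XY]| by (E[X^2] + E[Y^2])/2 (the increments are Gaussian, hence
   square integrable), the second from condition (ii) evaluated at the mesh s = 1/n.
   Since w <= 1, |beta_n|^r <= K^r n^(-r/2) w.  Finally w(a,b) is dominated by the
   block weight [j=1] + [k=1] + 2^alpha (1+|j-k|)^(-alpha), whose double sum over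
   j,k <= N is O(N) because the series sum_d (1+d)^(-alpha) converges for alpha > 1.
   The file proves the analytic estimate first, then the purely combinatorial
   summation bound for an arbitrary array obeying the estimate, and combines both. *)

lemma abs_mult_le_mean_squares:
  fixes x y :: real
  shows "\<bar>x * y\<bar> \<le> (x\<^sup>2 + y\<^sup>2) / 2"
proof -
  have "0 \<le> (\<bar>x\<bar> - \<bar>y\<bar>)\<^sup>2" by simp
  then show ?thesis by (simp add: power2_eq_square abs_mult algebra_simps)
qed

text \<open>A weak form of Cauchy--Schwarz: the mixed moment is bounded by the mean of the
  second moments.  It suffices whenever both second moments admit the same bound.\<close>
lemma abs_integral_mult_le_mean_squares:
  fixes X Y :: "'a \<Rightarrow> real"
  assumes [measurable]: "X \<in> borel_measurable M" "Y \<in> borel_measurable M"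
    and X2: "integrable M (\<lambda>\<omega>. (X \<omega>)\<^sup>2)" and Y2: "integrable M (\<lambda>\<omega>. (Y \<omega>)\<^sup>2)"
  shows "\<bar>\<integral>\<omega>. X \<omega> * Y \<omega> \<partial>M\<bar> \<le> ((\<integral>\<omega>. (X \<omega>)\<^sup>2 \<partial>M) + (\<integral>\<omega>. (Y \<omega>)\<^sup>2 \<partial>M)) / 2"
proof -
  have mean: "integrable M (\<lambda>\<omega>. ((X \<omega>)\<^sup>2 + (Y \<omega>)\<^sup>2) / 2)"
    using X2 Y2 by auto
  have XY: "integrable M (\<lambda>\<omega>. X \<omega> * Y \<omega>)"
    by (rule Bochner_Integration.integrable_bound[OF mean], measurable)
      (use abs_mult_le_mean_squares in auto)
  have "\<bar>\<integral>\<omega>. X \<omega> * Y \<omega> \<partial>M\<bar> \<le> (\<integral>\<omega>. \<bar>X \<omega> * Y \<omega>\<bar> \<partial>M)"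
    by (rule integral_abs_bound)
  also have "\<dots> \<le> (\<integral>\<omega>. ((X \<omega>)\<^sup>2 + (Y \<omega>)\<^sup>2) / 2 \<partial>M)"
    by (rule integral_mono[OF _ mean]) (use XY abs_mult_le_mean_squares in auto)
  also have "\<dots> = ((\<integral>\<omega>. (X \<omega>)\<^sup>2 \<partial>M) + (\<integral>\<omega>. (Y \<omega>)\<^sup>2 \<partial>M)) / 2"
    using X2 Y2 by simp
  finally show ?thesis .
qed

section \<open>Increments of a centered Gaussian process\<close>

lemma gaussian_process_measurable:
  assumes "centered_gaussian_process M W" and "0 \<le> u"
  shows "W u \<in> borel_measurable M"
  using assms unfolding centered_gaussian_process_def by auto

text \<open>An increment W_u - W_v is a linear combination of values of W, hence either
  almost surely zero or centered normal; in both cases it is square integrable.\<close>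
lemma gaussian_increment_square_integrable:
  assumes G: "centered_gaussian_process M W" and u: "0 \<le> u" and v: "0 \<le> v"
  shows "integrable M (\<lambda>\<omega>. (W u \<omega> - W v \<omega>)\<^sup>2)"
proof -
  have comb: "(\<lambda>\<omega>. \<Sum>i<length [u, v]. [1, -1] ! i * W ([u, v] ! i) \<omega>) = (\<lambda>\<omega>. W u \<omega> - W v \<omega>)"
    by (simp add: numeral_2_eq_2)
  have "\<forall>(ts :: real list) (cs :: real list). length ts = length cs \<longrightarrow> (\<forall>t\<in>set ts. t \<ge> 0) \<longrightarrow>
      (let X = (\<lambda>\<omega>. \<Sum>i<length ts. cs ! i * W (ts ! i) \<omega>) in
        (AE \<omega> in M. X \<omega> = 0) \<or> (\<exists>\<sigma>>0. distributed M lborel X (normal_density 0 \<sigma>)))"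
    using G unfolding centered_gaussian_process_def by blast
  from this[rule_format, of "[u, v]" "[1, -1]"]
  have "(AE \<omega> in M. W u \<omega> - W v \<omega> = 0) \<or>
        (\<exists>\<sigma>>0. distributed M lborel (\<lambda>\<omega>. W u \<omega> - W v \<omega>) (normal_density 0 \<sigma>))"
    using u v by (auto simp: Let_def comb)
  then show ?thesis
  proof
    assume "AE \<omega> in M. W u \<omega> - W v \<omega> = 0"
    then have "integrable M (\<lambda>\<omega>. (W u \<omega> - W v \<omega>)\<^sup>2) \<longleftrightarrow> integrable M (\<lambda>\<omega>. 0::real)"
      using gaussian_process_measurable[OF G u] gaussian_process_measurable[OF G v]
      by (intro integrable_cong_AE) auto
    then show ?thesis by simp
  next
    assume "\<exists>\<sigma>>0. distributed M lborel (\<lambda>\<omega>. W u \<omega> - W v \<omega>) (normal_density 0 \<sigma>)"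
    then obtain \<sigma> where "\<sigma> > 0" and D: "distributed M lborel (\<lambda>\<omega>. W u \<omega> - W v \<omega>) (normal_density 0 \<sigma>)"
      by blast
    then have "integrable lborel (\<lambda>x. normal_density 0 \<sigma> x * (x - 0)\<^sup>2)"
      by (intro integrable_normal_moment)
    then show ?thesis
      using distributed_integrable[OF D, of "\<lambda>x. x\<^sup>2"] by (simp add: normal_density_nonneg)
  qed
qed

lemma gaussian_increment_cov_bound:
  assumes G: "centered_gaussian_process M W" and "0 \<le> u" "0 \<le> v" "0 \<le> p" "0 \<le> q"
    and "(\<integral>\<omega>. (W u \<omega> - W v \<omega>)\<^sup>2 \<partial>M) \<le> A"
    and "(\<integral>\<omega>. (W p \<omega> - W q \<omega>)\<^sup>2 \<partial>M) \<le> A"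
  shows "\<bar>\<integral>\<omega>. (W u \<omega> - W v \<omega>) * (W p \<omega> - W q \<omega>) \<partial>M\<bar> \<le> A"
proof -
  note [measurable] = gaussian_process_measurable[OF G]
  have "\<bar>\<integral>\<omega>. (W u \<omega> - W v \<omega>) * (W p \<omega> - W q \<omega>) \<partial>M\<bar>
      \<le> ((\<integral>\<omega>. (W u \<omega> - W v \<omega>)\<^sup>2 \<partial>M) + (\<integral>\<omega>. (W p \<omega> - W q \<omega>)\<^sup>2 \<partial>M)) / 2"
    using assms by (intro abs_integral_mult_le_mean_squares gaussian_increment_square_integrable) auto
  then show ?thesis using assms by simp
qed

section \<open>Decay estimate for the increment covariances\<close>

text \<open>beta_n(a,b) is the covariance of the increments of mesh s = 1/n ending at
  t = (a+1)/n and r = (b+1)/n, which is the form used in conditions (i) and (ii).\<close>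
lemma beta_as_increment_cov:
  assumes "1 \<le> n"
  shows "beta M W n a b =
    (\<integral>\<omega>. (W (real (a+1) / n) \<omega> - W (real (a+1) / n - 1 / n) \<omega>)
        * (W (real (b+1) / n) \<omega> - W (real (b+1) / n - 1 / n) \<omega>) \<partial>M)"
proof -
  have "real (c+1) / n - 1 / n = real c / n" for c
    using assms by (simp add: divide_simps)
  then show ?thesis unfolding beta_def by simp
qed

lemma beta_bound_cond_i:
  assumes G: "centered_gaussian_process M W" and "cond_i M W T"
  obtains C where "0 \<le> C"
    and "\<And>n a b. 1 \<le> n \<Longrightarrow> real a + 1 \<le> real n * T \<Longrightarrow> real b + 1 \<le> real n * T \<Longrightarrow>
           \<bar>beta M W n a b\<bar> \<le> C * real n powr (-1/2)"
proof -
  obtain C1 where ci: "\<And>s t. 0 < s \<Longrightarrow> s \<le> t \<Longrightarrow> t \<le> T \<Longrightarrow>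
      (\<integral>\<omega>. (W t \<omega> - W (t - s) \<omega>)\<^sup>2 \<partial>M) \<le> C1 * s powr (1/2)"
    using \<open>cond_i M W T\<close> unfolding cond_i_def by blast
  have "\<bar>beta M W n a b\<bar> \<le> \<bar>C1\<bar> * real n powr (-1/2)"
    if n: "1 \<le> n" and aT: "real a + 1 \<le> real n * T" and bT: "real b + 1 \<le> real n * T" for n a b :: nat
  proof -
    have np: "real n > 0" using n by simp
    have mesh: "(1 / real n) powr (1/2) = real n powr (-1/2)"
      using np by (simp add: powr_minus_divide powr_divide)
    have square: "(\<integral>\<omega>. (W (real (c+1) / n) \<omega> - W (real (c+1) / n - 1 / n) \<omega>)\<^sup>2 \<partial>M)
        \<le> \<bar>C1\<bar> * real n powr (-1/2)" if cT: "real c + 1 \<le> real n * T" for c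
    proof -
      have "real (c+1) / n \<le> T" using cT np by (simp add: divide_simps mult.commute)
      moreover have "1 / real n \<le> real (c+1) / n" using np by (simp add: divide_simps)
      ultimately have "(\<integral>\<omega>. (W (real (c+1) / n) \<omega> - W (real (c+1) / n - 1 / n) \<omega>)\<^sup>2 \<partial>M)
          \<le> C1 * (1 / real n) powr (1/2)"
        using np by (intro ci) auto
      also have "\<dots> \<le> \<bar>C1\<bar> * real n powr (-1/2)" unfolding mesh by (intro mult_right_mono) auto
      finally show ?thesis .
    qed
    show ?thesis
      unfolding beta_as_increment_cov[OF n] using np
      by (intro gaussian_increment_cov_bound[OF G] square aT bT) (auto simp: divide_simps)
  qed
  then show ?thesis using that[of "\<bar>C1\<bar>"] by auto
qed

lemma cond_ii_rhs_at_mesh: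
  fixes n d m C \<alpha> :: real
  assumes n: "n \<ge> 1" and d: "d \<ge> 1" and m: "m \<ge> 1/n" and a1: "1 < \<alpha>" and a2: "\<alpha> \<le> 3/2"
  shows "C * (1/n)\<^sup>2 * (d/n) powr (-\<alpha>) * m powr (-(3/2-\<alpha>)) + C * (1/n)\<^sup>2 * (d/n) powr (-3/2)
     \<le> 2 * \<bar>C\<bar> * n powr (-1/2) * d powr (-\<alpha>)"
proof -
  have np: "n > 0" using n by simp
  have sq: "(1/n)\<^sup>2 = n powr (-2)"
    using np by (simp add: powr_minus divide_simps powr_realpow)
  have scale_\<alpha>: "(d/n) powr (-\<alpha>) = d powr (-\<alpha>) * n powr \<alpha>"
    using np d by (simp add: powr_divide powr_minus divide_simps)
  have scale_3_2: "(d/n) powr (-3/2) = d powr (-3/2) * n powr (3/2)"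
    using np d by (simp add: powr_divide powr_minus divide_simps)
  have m_le: "m powr (-(3/2-\<alpha>)) \<le> n powr (3/2-\<alpha>)"
  proof -
    have "m powr (-(3/2-\<alpha>)) \<le> (1/n) powr (-(3/2-\<alpha>))"
      by (rule powr_mono2') (use a2 np m in auto)
    also have "\<dots> = n powr (3/2-\<alpha>)"
      using np by (simp add: powr_divide powr_minus divide_simps)
    finally show ?thesis .
  qed
  have first: "(1/n)\<^sup>2 * (d/n) powr (-\<alpha>) * m powr (-(3/2-\<alpha>)) \<le> n powr (-1/2) * d powr (-\<alpha>)"
  proof -
    have "(1/n)\<^sup>2 * (d/n) powr (-\<alpha>) * m powr (-(3/2-\<alpha>))
        \<le> (1/n)\<^sup>2 * (d/n) powr (-\<alpha>) * n powr (3/2-\<alpha>)"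
      using m_le by (intro mult_left_mono) auto
    also have "\<dots> = d powr (-\<alpha>) * (n powr (-2) * n powr \<alpha> * n powr (3/2-\<alpha>))"
      using scale_\<alpha> sq by simp
    also have "n powr (-2) * n powr \<alpha> * n powr (3/2-\<alpha>) = n powr (-1/2)"
      by (simp add: powr_add[symmetric])
    finally show ?thesis by (simp add: mult.commute)
  qed
  have second: "(1/n)\<^sup>2 * (d/n) powr (-3/2) \<le> n powr (-1/2) * d powr (-\<alpha>)"
  proof -
    have "(1/n)\<^sup>2 * (d/n) powr (-3/2) = d powr (-3/2) * (n powr (-2) * n powr (3/2))"
      using scale_3_2 sq by simp
    also have "n powr (-2) * n powr (3/2) = n powr (-1/2)"
      by (simp add: powr_add[symmetric])
    also have "d powr (-3/2) * n powr (-1/2) \<le> d powr (-\<alpha>) * n powr (-1/2)"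
      by (intro mult_right_mono powr_mono) (use a2 d in auto)
    finally show ?thesis by (simp add: mult.commute)
  qed
  have times_C: "C * x \<le> \<bar>C\<bar> * (n powr (-1/2) * d powr (-\<alpha>))"
    if "0 \<le> x" "x \<le> n powr (-1/2) * d powr (-\<alpha>)" for x
  proof -
    have "C * x \<le> \<bar>C\<bar> * x" using that by (intro mult_right_mono) auto
    also have "\<dots> \<le> \<bar>C\<bar> * (n powr (-1/2) * d powr (-\<alpha>))" using that by (intro mult_left_mono) auto
    finally show ?thesis .
  qed
  have "C * ((1/n)\<^sup>2 * (d/n) powr (-\<alpha>) * m powr (-(3/2-\<alpha>))) \<le> \<bar>C\<bar> * (n powr (-1/2) * d powr (-\<alpha>))"
    by (rule times_C[OF _ first]) simp
  moreover have "C * ((1/n)\<^sup>2 * (d/n) powr (-3/2)) \<le> \<bar>C\<bar> * (n powr (-1/2) * d powr (-\<alpha>))"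
    by (rule times_C[OF _ second]) simp
  ultimately show ?thesis by (simp add: mult.assoc)
qed

lemma beta_bound_cond_ii:
  assumes "cond_ii M W T"
  obtains C \<alpha> where "0 \<le> C" and "1 < \<alpha>"
    and "\<And>n a b. 1 \<le> n \<Longrightarrow> 1 \<le> a \<Longrightarrow> 1 \<le> b \<Longrightarrow> 2 \<le> \<bar>real a - real b\<bar> \<Longrightarrow>
           real a + 1 \<le> real n * T \<Longrightarrow> real b + 1 \<le> real n * T \<Longrightarrow>
           \<bar>beta M W n a b\<bar> \<le> C * real n powr (-1/2) * \<bar>real a - real b\<bar> powr (-\<alpha>)"
proof -
  obtain C2 \<alpha> where a1: "1 < \<alpha>" and a2: "\<alpha> \<le> 3/2" and cii: "\<And>s r t.
      0 < s \<Longrightarrow> 2 * s \<le> r \<Longrightarrow> r \<le> T \<Longrightarrow> 2 * s \<le> t \<Longrightarrow> t \<le> T \<Longrightarrow> \<bar>t - r\<bar> \<ge> 2 * s \<Longrightarrow>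
        \<bar>(\<integral>\<omega>. (W t \<omega> - W (t - s) \<omega>) * (W r \<omega> - W (r - s) \<omega>) \<partial>M)\<bar>
          \<le> C2 * s\<^sup>2 * \<bar>t - r\<bar> powr (-\<alpha>) * (min t r - s) powr (-(3/2 - \<alpha>))
             + C2 * s\<^sup>2 * \<bar>t - r\<bar> powr (-3/2)"
    using \<open>cond_ii M W T\<close> unfolding cond_ii_def by blast
  have "\<bar>beta M W n a b\<bar> \<le> 2 * \<bar>C2\<bar> * real n powr (-1/2) * \<bar>real a - real b\<bar> powr (-\<alpha>)"
    if n: "1 \<le> n" and a0: "1 \<le> a" and b0: "1 \<le> b" and d: "2 \<le> \<bar>real a - real b\<bar>"
      and aT: "real a + 1 \<le> real n * T" and bT: "real b + 1 \<le> real n * T" for n a b :: nat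
  proof -
    define s t r where "s = 1 / real n" and "t = real (a+1) / n" and "r = real (b+1) / n"
    have np: "real n > 0" using n by simp
    have tr: "\<bar>t - r\<bar> = \<bar>real a - real b\<bar> / real n"
      unfolding t_def r_def using np by (simp add: diff_divide_distrib[symmetric] abs_divide)
    have s2t: "2 * s \<le> t" and s2r: "2 * s \<le> r"
      unfolding s_def t_def r_def using np a0 b0 by (auto simp: divide_simps)
    have "t \<le> T" "r \<le> T" unfolding t_def r_def using aT bT np by (simp_all add: divide_simps mult.commute)
    moreover have "\<bar>t - r\<bar> \<ge> 2 * s" unfolding tr s_def using np d by (simp add: divide_simps)
    ultimately have "\<bar>beta M W n a b\<bar> \<le> C2 * s\<^sup>2 * \<bar>t - r\<bar> powr (-\<alpha>) * (min t r - s) powr (-(3/2 - \<alpha>))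
             + C2 * s\<^sup>2 * \<bar>t - r\<bar> powr (-3/2)"
      unfolding beta_as_increment_cov[OF n] s_def t_def r_def using np s2t s2r
      by (intro cii) (auto simp: s_def t_def r_def)
    also have "\<dots> \<le> 2 * \<bar>C2\<bar> * real n powr (-1/2) * \<bar>real a - real b\<bar> powr (-\<alpha>)"
      unfolding tr s_def using n d a1 a2 s2t s2r
      by (intro cond_ii_rhs_at_mesh) (auto simp: s_def)
    finally show ?thesis .
  qed
  then show ?thesis using that[of "2 * \<bar>C2\<bar>" \<alpha>] a1 by auto
qed

definition decay_weight :: "real \<Rightarrow> nat \<Rightarrow> nat \<Rightarrow> real" where
  "decay_weight \<alpha> a b =
     (if a = 0 \<or> b = 0 \<or> \<bar>real a - real b\<bar> \<le> 1 then 1 else \<bar>real a - real b\<bar> powr (-\<alpha>))"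

lemma decay_weight_nonneg: "0 \<le> decay_weight \<alpha> a b"
  by (simp add: decay_weight_def)

lemma decay_weight_le_1:
  assumes "0 \<le> \<alpha>"
  shows "decay_weight \<alpha> a b \<le> 1"
proof -
  have "x powr (-\<alpha>) \<le> 1" if "1 \<le> x" for x :: real
    using that assms powr_mono[of "-\<alpha>" 0 x] by simp
  then show ?thesis by (simp add: decay_weight_def)
qed

lemma beta_decay_estimate:
  assumes G: "centered_gaussian_process M W" and "cond_i M W T" and "cond_ii M W T"
  obtains K \<alpha> where "0 \<le> K" and "1 < \<alpha>"
    and "\<And>n a b. 1 \<le> n \<Longrightarrow> real a + 1 \<le> real n * T \<Longrightarrow> real b + 1 \<le> real n * T \<Longrightarrow>
           \<bar>beta M W n a b\<bar> \<le> K * real n powr (-1/2) * decay_weight \<alpha> a b"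
proof -
  obtain C1 where C1: "0 \<le> C1" and near: "\<And>n a b. 1 \<le> n \<Longrightarrow> real a + 1 \<le> real n * T \<Longrightarrow>
      real b + 1 \<le> real n * T \<Longrightarrow> \<bar>beta M W n a b\<bar> \<le> C1 * real n powr (-1/2)"
    using beta_bound_cond_i[OF G \<open>cond_i M W T\<close>] by blast
  obtain C2 \<alpha> where C2: "0 \<le> C2" and \<alpha>: "1 < \<alpha>" and far: "\<And>n a b. 1 \<le> n \<Longrightarrow> 1 \<le> a \<Longrightarrow> 1 \<le> b \<Longrightarrow>
      2 \<le> \<bar>real a - real b\<bar> \<Longrightarrow> real a + 1 \<le> real n * T \<Longrightarrow> real b + 1 \<le> real n * T \<Longrightarrow>
      \<bar>beta M W n a b\<bar> \<le> C2 * real n powr (-1/2) * \<bar>real a - real b\<bar> powr (-\<alpha>)"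
    using beta_bound_cond_ii[OF \<open>cond_ii M W T\<close>] by blast
  have "\<bar>beta M W n a b\<bar> \<le> (C1 + C2) * real n powr (-1/2) * decay_weight \<alpha> a b"
    if n: "1 \<le> n" and aT: "real a + 1 \<le> real n * T" and bT: "real b + 1 \<le> real n * T" for n a b
  proof (cases "a = 0 \<or> b = 0 \<or> \<bar>real a - real b\<bar> \<le> 1")
    case True
    have "\<bar>beta M W n a b\<bar> \<le> C1 * real n powr (-1/2)" by (rule near[OF n aT bT])
    also have "\<dots> \<le> (C1 + C2) * real n powr (-1/2)" using C2 by (intro mult_right_mono) auto
    finally show ?thesis using True by (simp add: decay_weight_def)
  next
    case False
    then have "a \<ge> b + 2 \<or> b \<ge> a + 2" by linarith
    then have "2 \<le> \<bar>real a - real b\<bar>" by linarith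
    with False have "\<bar>beta M W n a b\<bar> \<le> C2 * (real n powr (-1/2) * \<bar>real a - real b\<bar> powr (-\<alpha>))"
      using far[OF n _ _ _ aT bT] by (simp add: mult.assoc)
    also have "\<dots> \<le> (C1 + C2) * (real n powr (-1/2) * \<bar>real a - real b\<bar> powr (-\<alpha>))"
      using C1 by (intro mult_right_mono) auto
    finally show ?thesis using False by (simp add: decay_weight_def mult.assoc)
  qed
  then show ?thesis using that[of "C1 + C2" \<alpha>] C1 C2 \<alpha> by auto
qed

section \<open>Summing the decay weights over the 2x2 blocks\<close>

text \<open>Block (j,k) of the sum contains the indices a in {2j-1, 2j-2}, b in {2k-1, 2k-2};
  this weight dominates the decay weight on the whole block.\<close>
definition block_weight :: "real \<Rightarrow> nat \<Rightarrow> nat \<Rightarrow> real" where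
  "block_weight \<alpha> j k = (if j = 1 then 1 else 0) + (if k = 1 then 1 else 0)
                         + 2 powr \<alpha> * (1 + \<bar>real j - real k\<bar>) powr (-\<alpha>)"

lemma decay_weight_le_block_weight:
  assumes \<alpha>: "1 < \<alpha>" and "1 \<le> j" "1 \<le> k"
    and ab: "a \<in> {2*j-1, 2*j-2}" "b \<in> {2*k-1, 2*k-2}"
  shows "decay_weight \<alpha> a b \<le> block_weight \<alpha> j k"
proof -
  have w1: "decay_weight \<alpha> a b \<le> 1" using \<alpha> by (intro decay_weight_le_1) auto
  have tail0: "0 \<le> 2 powr \<alpha> * (1 + \<bar>real j - real k\<bar>) powr (-\<alpha>)" by simp
  consider "j = 1 \<or> k = 1" | "j \<ge> 2" "k \<ge> 2" "j \<le> k + 1" "k \<le> j + 1"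
    | "j \<ge> 2" "k \<ge> 2" "j \<ge> k + 2 \<or> k \<ge> j + 2"
    using assms by linarith
  then show ?thesis
  proof cases
    case 1
    then have "1 \<le> (if j = 1 then 1 else 0) + (if k = 1 then 1 else (0::real))" by auto
    then show ?thesis using w1 tail0 unfolding block_weight_def by linarith
  next
    case 2
    have "(1::real) = 2 powr \<alpha> * 2 powr (-\<alpha>)" by (simp add: powr_add[symmetric])
    also have "\<dots> \<le> 2 powr \<alpha> * (1 + \<bar>real j - real k\<bar>) powr (-\<alpha>)"
    proof -
      have "1 + \<bar>real j - real k\<bar> \<le> 2" using 2 by linarith
      then show ?thesis using \<alpha> by (intro mult_left_mono powr_mono2') auto
    qed
    finally show ?thesis using w1 2 by (auto simp: block_weight_def)
  next
    case 3
    have ra: "real a \<in> {2 * real j - 1, 2 * real j - 2}" and rb: "real b \<in> {2 * real k - 1, 2 * real k - 2}"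
      using ab 3 by (auto simp: of_nat_diff)
    moreover have jk: "real j \<ge> real k + 2 \<or> real k \<ge> real j + 2" using 3 by linarith
    ultimately have dist: "1 + \<bar>real j - real k\<bar> \<le> \<bar>real a - real b\<bar>" by auto
    have "a \<noteq> 0" "b \<noteq> 0" using ab 3 by auto
    moreover have "\<not> \<bar>real a - real b\<bar> \<le> 1" using dist jk by linarith
    ultimately have "decay_weight \<alpha> a b = \<bar>real a - real b\<bar> powr (-\<alpha>)"
      by (simp add: decay_weight_def)
    also have "\<dots> \<le> (1 + \<bar>real j - real k\<bar>) powr (-\<alpha>)"
      using \<alpha> dist by (intro powr_mono2') auto
    also have "\<dots> \<le> 2 powr \<alpha> * (1 + \<bar>real j - real k\<bar>) powr (-\<alpha>)"
      using \<alpha> by (intro mult_le_cancel_right1[THEN iffD2]) (auto simp: ge_one_powr_ge_zero)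
    finally show ?thesis using 3 by (simp add: block_weight_def)
  qed
qed

definition decay_series :: "real \<Rightarrow> real" where
  "decay_series \<alpha> = (\<Sum>d. (1 + real d) powr (-\<alpha>))"

lemma summable_decay_series:
  assumes "1 < \<alpha>"
  shows "summable (\<lambda>d::nat. (1 + real d) powr (-\<alpha>))"
proof -
  have "summable (\<lambda>d::nat. real d powr (-\<alpha>))" using assms by (simp add: summable_real_powr_iff)
  then have "summable (\<lambda>d::nat. real (Suc d) powr (-\<alpha>))" by (subst summable_Suc_iff)
  then show ?thesis by (simp add: add.commute)
qed

text \<open>Each row of (1+|j-k|)^(-alpha) splits at the diagonal into two pieces, each a
  partial sum of the decay series.\<close>
lemma row_sum_le_decay_series:
  assumes \<alpha>: "1 < \<alpha>"
  shows "(\<Sum>k\<in>{1..N::nat}. (1 + \<bar>real j - real k\<bar>) powr (-\<alpha>)) \<le> 2 * decay_series \<alpha>"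
proof -
  define e where "e = (\<lambda>d::nat. (1 + real d) powr (-\<alpha>))"
  have partial: "sum e D \<le> decay_series \<alpha>" if "finite D" for D
    unfolding decay_series_def e_def
    by (rule sum_le_suminf[OF summable_decay_series[OF \<alpha>]]) (use that in auto)
  define A B where "A = {1..N} \<inter> {..j}" and "B = {1..N} - {..j}"
  have "(\<Sum>k\<in>{1..N}. (1 + \<bar>real j - real k\<bar>) powr (-\<alpha>)) = (\<Sum>k\<in>A. e (j - k)) + (\<Sum>k\<in>B. e (k - j))"
    unfolding A_def B_def e_def
    by (subst sum.Int_Diff[of _ _ "{..j}"]) (auto simp: of_nat_diff intro!: arg_cong2[where f="(+)"] sum.cong)
  also have "\<dots> = sum e ((\<lambda>k. j - k) ` A) + sum e ((\<lambda>k. k - j) ` B)"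
    by (subst (1 2) sum.reindex) (auto simp: inj_on_def A_def B_def)
  also have "\<dots> \<le> 2 * decay_series \<alpha>"
    using partial[of "(\<lambda>k. j - k) ` A"] partial[of "(\<lambda>k. k - j) ` B"] by (auto simp: A_def B_def)
  finally show ?thesis .
qed

text \<open>The block weights over an N x N array sum to O(N): the boundary rows and
  columns contribute 2N, the decaying part 2^alpha * 2 N * decay_series.\<close>
lemma block_weight_sum:
  assumes \<alpha>: "1 < \<alpha>"
  shows "(\<Sum>j\<in>{1..N}. \<Sum>k\<in>{1..N}. block_weight \<alpha> j k)
         \<le> real N * (2 + 2 * 2 powr \<alpha> * decay_series \<alpha>)"
proof -
  have row: "(\<Sum>k\<in>{1..N}. block_weight \<alpha> j k)
      \<le> (if j = 1 then real N else 0) + 1 + 2 * 2 powr \<alpha> * decay_series \<alpha>" if "j \<in> {1..N}" for j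
  proof -
    have "(\<Sum>k\<in>{1..N}. block_weight \<alpha> j k) = (\<Sum>k\<in>{1..N}. if j = 1 then 1 else 0)
        + (\<Sum>k\<in>{1..N}. if k = 1 then 1 else 0)
        + 2 powr \<alpha> * (\<Sum>k\<in>{1..N}. (1 + \<bar>real j - real k\<bar>) powr (-\<alpha>))"
      by (simp add: block_weight_def sum.distrib sum_distrib_left)
    moreover have "(\<Sum>k\<in>{1..N}. if j = 1 then 1 else 0) = (if j = 1 then real N else 0)" by simp
    moreover have "(\<Sum>k\<in>{1..N}. if k = 1 then 1 else 0::real) \<le> 1" using that by (simp add: sum.delta)
    moreover have "2 powr \<alpha> * (\<Sum>k\<in>{1..N}. (1 + \<bar>real j - real k\<bar>) powr (-\<alpha>))
        \<le> 2 powr \<alpha> * (2 * decay_series \<alpha>)"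
      by (intro mult_left_mono row_sum_le_decay_series[OF \<alpha>]) auto
    ultimately show ?thesis by linarith
  qed
  have "(\<Sum>j\<in>{1..N}. \<Sum>k\<in>{1..N}. block_weight \<alpha> j k)
      \<le> (\<Sum>j\<in>{1..N}. (if j = 1 then real N else 0) + 1 + 2 * 2 powr \<alpha> * decay_series \<alpha>)"
    by (rule sum_mono[OF row])
  also have "\<dots> \<le> real N * (2 + 2 * 2 powr \<alpha> * decay_series \<alpha>)"
    by (simp add: sum.distrib sum.delta algebra_simps)
  finally show ?thesis .
qed

lemma power_le_times_weight:
  fixes x P g :: real
  assumes "0 \<le> x" "x \<le> P * g" "0 \<le> g" "g \<le> 1" "0 \<le> P" "1 \<le> r"
  shows "x ^ r \<le> P ^ r * g"
proof -
  have "x ^ r \<le> (P * g) ^ r" using assms by (intro power_mono) auto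
  also have "\<dots> = P ^ r * g ^ r" by (simp add: power_mult_distrib)
  also have "\<dots> \<le> P ^ r * g ^ 1"
    using assms by (intro mult_left_mono power_decreasing) auto
  finally show ?thesis by simp
qed

lemma block_sum_bound:
  fixes B :: "nat \<Rightarrow> nat \<Rightarrow> real"
  assumes \<alpha>: "1 < \<alpha>" and r: "1 \<le> r" and K: "0 \<le> K"
    and est: "\<And>a b. a < 2 * N \<Longrightarrow> b < 2 * N \<Longrightarrow> \<bar>B a b\<bar> \<le> K * decay_weight \<alpha> a b"
  shows "(\<Sum>j\<in>{1..N}. \<Sum>k\<in>{1..N}.
            \<bar>B (2*j-1) (2*k-1)\<bar> ^ r + \<bar>B (2*j-1) (2*k-2)\<bar> ^ r
          + \<bar>B (2*j-2) (2*k-1)\<bar> ^ r + \<bar>B (2*j-2) (2*k-2)\<bar> ^ r)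
         \<le> 4 * K ^ r * (2 + 2 * 2 powr \<alpha> * decay_series \<alpha>) * real N"
proof -
  have entry: "\<bar>B a b\<bar> ^ r \<le> K ^ r * block_weight \<alpha> j k"
    if "j \<in> {1..N}" "k \<in> {1..N}" "a \<in> {2*j-1, 2*j-2}" "b \<in> {2*k-1, 2*k-2}" for j k a b
  proof -
    have "\<bar>B a b\<bar> ^ r \<le> K ^ r * decay_weight \<alpha> a b"
      using that \<alpha> K r est[of a b]
      by (intro power_le_times_weight decay_weight_nonneg decay_weight_le_1) auto
    also have "\<dots> \<le> K ^ r * block_weight \<alpha> j k"
      using that \<alpha> K by (intro mult_left_mono decay_weight_le_block_weight) auto
    finally show ?thesis .
  qed
  have "(\<Sum>j\<in>{1..N}. \<Sum>k\<in>{1..N}.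
            \<bar>B (2*j-1) (2*k-1)\<bar> ^ r + \<bar>B (2*j-1) (2*k-2)\<bar> ^ r
          + \<bar>B (2*j-2) (2*k-1)\<bar> ^ r + \<bar>B (2*j-2) (2*k-2)\<bar> ^ r)
        \<le> (\<Sum>j\<in>{1..N}. \<Sum>k\<in>{1..N}. 4 * K ^ r * block_weight \<alpha> j k)"
  proof (intro sum_mono)
    fix j k assume jk: "j \<in> {1..N}" "k \<in> {1..N}"
    show "\<bar>B (2*j-1) (2*k-1)\<bar> ^ r + \<bar>B (2*j-1) (2*k-2)\<bar> ^ r
        + \<bar>B (2*j-2) (2*k-1)\<bar> ^ r + \<bar>B (2*j-2) (2*k-2)\<bar> ^ r \<le> 4 * K ^ r * block_weight \<alpha> j k"
      using entry[OF jk, of "2*j-1" "2*k-1"] entry[OF jk, of "2*j-1" "2*k-2"]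
        entry[OF jk, of "2*j-2" "2*k-1"] entry[OF jk, of "2*j-2" "2*k-2"] by simp
  qed
  also have "\<dots> = 4 * K ^ r * (\<Sum>j\<in>{1..N}. \<Sum>k\<in>{1..N}. block_weight \<alpha> j k)"
    by (simp add: sum_distrib_left)
  also have "\<dots> \<le> 4 * K ^ r * (real N * (2 + 2 * 2 powr \<alpha> * decay_series \<alpha>))"
    using K by (intro mult_left_mono block_weight_sum[OF \<alpha>]) auto
  finally show ?thesis by (simp add: algebra_simps)
qed

text \<open>The corollary for an arbitrary array B_n(a,b) satisfying the decay estimate
  with the scaling n^(-1/2) whenever both increments lie in [0,T]; the blocks up
  to N = floor(nt/2) with t <= T only involve such indices.\<close>
lemma block_sum_bound_up_to_time:
  fixes B :: "nat \<Rightarrow> nat \<Rightarrow> nat \<Rightarrow> real" and r :: nat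
  assumes \<alpha>: "1 < \<alpha>" and r: "1 \<le> r" and K: "0 \<le> K"
    and est: "\<And>n a b. 1 \<le> n \<Longrightarrow> real a + 1 \<le> real n * T \<Longrightarrow> real b + 1 \<le> real n * T \<Longrightarrow>
           \<bar>B n a b\<bar> \<le> K * real n powr (-1/2) * decay_weight \<alpha> a b"
  shows "\<exists>C::real. \<forall>n::nat. \<forall>t::real. n \<ge> 1 \<and> 0 \<le> t \<and> t \<le> T \<longrightarrow>
     (\<Sum>j\<in>{1..nat \<lfloor>real n * t / 2\<rfloor>}. \<Sum>k\<in>{1..nat \<lfloor>real n * t / 2\<rfloor>}.
        \<bar>B n (2*j-1) (2*k-1)\<bar> ^ r + \<bar>B n (2*j-1) (2*k-2)\<bar> ^ r
      + \<bar>B n (2*j-2) (2*k-1)\<bar> ^ r + \<bar>B n (2*j-2) (2*k-2)\<bar> ^ r)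
     \<le> C * real (nat \<lfloor>real n * t / 2\<rfloor>) * real n powr (- real r / 2)"
proof (intro exI allI impI)
  fix n :: nat and t :: real
  assume nt: "n \<ge> 1 \<and> 0 \<le> t \<and> t \<le> T"
  define N where "N = nat \<lfloor>real n * t / 2\<rfloor>"
  have "0 \<le> real n * t / 2" using nt by simp
  then have "2 * real N \<le> real n * t" unfolding N_def by linarith
  also have "\<dots> \<le> real n * T" using nt by (intro mult_left_mono) auto
  finally have "\<bar>B n a b\<bar> \<le> (K * real n powr (-1/2)) * decay_weight \<alpha> a b"
    if "a < 2 * N" "b < 2 * N" for a b
    using that nt by (intro est) linarith+
  from block_sum_bound[OF \<alpha> r _ this]
  show "(\<Sum>j\<in>{1..N}. \<Sum>k\<in>{1..N}.
        \<bar>B n (2*j-1) (2*k-1)\<bar> ^ r + \<bar>B n (2*j-1) (2*k-2)\<bar> ^ r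
      + \<bar>B n (2*j-2) (2*k-1)\<bar> ^ r + \<bar>B n (2*j-2) (2*k-2)\<bar> ^ r)
     \<le> (4 * K ^ r * (2 + 2 * 2 powr \<alpha> * decay_series \<alpha>)) * real N * real n powr (- real r / 2)"
    using K nt by (simp add: power_mult_distrib powr_power algebra_simps)
qed

theorem corollary4p2:
  fixes M :: "'a measure" and W :: "real \<Rightarrow> 'a \<Rightarrow> real" and T :: real
  assumes "T > 0"
    and "centered_gaussian_process M W"
    and "continuous_on ({0..} \<times> {0..}) (\<lambda>(s, t). cov_fun M W s t)"
    and "cond_i M W T"
    and "cond_ii M W T"
  shows "\<forall>r::nat. r \<ge> 1 \<longrightarrow> (\<exists>C::real. \<forall>n::nat. \<forall>t::real. n \<ge> 1 \<and> 0 \<le> t \<and> t \<le> T \<longrightarrow>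
     (\<Sum>j\<in>{1..nat \<lfloor>real n * t / 2\<rfloor>}. \<Sum>k\<in>{1..nat \<lfloor>real n * t / 2\<rfloor>}.
        \<bar>beta M W n (2*j-1) (2*k-1)\<bar> ^ r + \<bar>beta M W n (2*j-1) (2*k-2)\<bar> ^ r
      + \<bar>beta M W n (2*j-2) (2*k-1)\<bar> ^ r + \<bar>beta M W n (2*j-2) (2*k-2)\<bar> ^ r)
     \<le> C * real (nat \<lfloor>real n * t / 2\<rfloor>) * real n powr (- real r / 2))"
proof -
  obtain K \<alpha> where "0 \<le> K" "1 < \<alpha>"
    and "\<And>n a b. 1 \<le> n \<Longrightarrow> real a + 1 \<le> real n * T \<Longrightarrow> real b + 1 \<le> real n * T \<Longrightarrow>
           \<bar>beta M W n a b\<bar> \<le> K * real n powr (-1/2) * decay_weight \<alpha> a b"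
    using beta_decay_estimate[OF assms(2,4,5)] by blast
  then show ?thesis
    using block_sum_bound_up_to_time[where B = "beta M W"] by blast
qed

end
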